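(* Let $X$ be an infinite Tychonoff space and let $E$ be a Banach space. If $T:C_p(X)\to E_w$ is a sequentially continuous map (not necessarily linear), then the set $X\setminus B(T)$ is finite, where $B(T)$ is the set of all points $t\in X$ having an open neighbourhood $U$ in $X$ such that $\sup\{\|T(f)\|: f\in C(X),\ \operatorname{supp}(f)\subset U\}<\infty$.
   Context: $C_p(X)$ is the space $C(X)$ of continuous real-valued functions on $X$ with the pointwise convergence topology; $E_w$ is $E$ with its weak topology; $\|\cdot\|$ is the norm of $E$. For $f:X\to\mathbb{R}$, $\operatorname{supp}(f)=\{t\in X: f(t)\neq 0\}$. A map is sequentially continuous if it sends convergent sequences to convergent sequences. *)

theory Defs
  imports "HOL-Analysis.Analysis"
begin

definition tychonoff_space :: "'a topology \<Rightarrow> bool" where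
  "tychonoff_space X \<longleftrightarrow> completely_regular_space X \<and> Hausdorff_space X"

text \<open>The carrier C(X): continuous real functions on the topological space X,
  made extensional (value undefined off the carrier) so each element of C(X)
  has a unique representative.\<close>
definition Cfun :: "'a topology \<Rightarrow> ('a \<Rightarrow> real) set" where
  "Cfun X = {f. continuous_map X euclideanreal f \<and> f \<in> extensional (topspace X)}"

definition supp :: "'a topology \<Rightarrow> ('a \<Rightarrow> real) \<Rightarrow> 'a set" where
  "supp X f = {t \<in> topspace X. f t \<noteq> 0}"

definition weakly_convergent_to :: "(nat \<Rightarrow> 'b::real_normed_vector) \<Rightarrow> 'b \<Rightarrow> bool" where
  "weakly_convergent_to x y \<longleftrightarrow>
     (\<forall>\<phi> :: 'b \<Rightarrow> real. bounded_linear \<phi> \<longrightarrow> (\<lambda>n. \<phi> (x n)) \<longlonglongrightarrow> \<phi> y)"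

definition seq_cont_Cp_weak :: "'a topology \<Rightarrow> (('a \<Rightarrow> real) \<Rightarrow> 'b::real_normed_vector) \<Rightarrow> bool" where
  "seq_cont_Cp_weak X T \<longleftrightarrow>
     (\<forall>fs f. (\<forall>n. fs n \<in> Cfun X) \<longrightarrow> f \<in> Cfun X \<longrightarrow>
        (\<forall>t\<in>topspace X. (\<lambda>n. fs n t) \<longlonglongrightarrow> f t) \<longrightarrow>
        weakly_convergent_to (\<lambda>n. T (fs n)) (T f))"

definition BT :: "'a topology \<Rightarrow> (('a \<Rightarrow> real) \<Rightarrow> 'b::real_normed_vector) \<Rightarrow> 'a set" where
  "BT X T = {t \<in> topspace X. \<exists>U. openin X U \<and> t \<in> U \<and>
      bdd_above {norm (T f) | f. f \<in> Cfun X \<and> supp X f \<subseteq> U}}"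

end

theory Submission
  imports Defs
begin

text \<open>If infinitely many points lay outside B(T), regularity would give pairwise disjoint open
  sets U n, each containing such a point, and hence continuous f n supported in U n with
  norm (T (f n)) > n. By disjointness f n \<rightarrow> 0 pointwise, so T (f n) \<rightarrow> T 0 weakly. But weakly
  convergent sequences are norm bounded: otherwise a gliding hump series
  \<Sum>k. 3 ^ -k * \<psi> k, built from norming functionals \<psi> k given by Hahn-Banach, would be an
  element of the dual that is unbounded on the sequence.\<close>

section \<open>Norming functionals\<close>

text \<open>Partial linear functionals are encoded by their graphs, so that extension is inclusion
  and Zorn's lemma applies directly.\<close>

definition dominated_linear_graph :: "('b::real_normed_vector \<times> real) set \<Rightarrow> bool" where
  "dominated_linear_graph G \<longleftrightarrow>
     (\<forall>x a y b. (x, a) \<in> G \<longrightarrow> (y, b) \<in> G \<longrightarrow> (x + y, a + b) \<in> G) \<and>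
     (\<forall>x a c. (x, a) \<in> G \<longrightarrow> (c *\<^sub>R x, c * a) \<in> G) \<and>
     (\<forall>x a. (x, a) \<in> G \<longrightarrow> a \<le> norm x)"

lemma dominated_linear_graphD:
  assumes "dominated_linear_graph G"
  shows dominated_linear_graph_add: "(x, a) \<in> G \<Longrightarrow> (y, b) \<in> G \<Longrightarrow> (x + y, a + b) \<in> G"
    and dominated_linear_graph_scale: "(x, a) \<in> G \<Longrightarrow> (c *\<^sub>R x, c * a) \<in> G"
    and dominated_linear_graph_le_norm: "(x, a) \<in> G \<Longrightarrow> a \<le> norm x"
  using assms unfolding dominated_linear_graph_def by blast+

lemma dominated_linear_graph_unique:
  assumes G: "dominated_linear_graph G" and "(x, a) \<in> G" "(x, b) \<in> G"
  shows "a = b"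
proof -
  have "(x + (-1) *\<^sub>R x, a + (-1) * b) \<in> G" "(x + (-1) *\<^sub>R x, b + (-1) * a) \<in> G"
    using assms by (blast intro: dominated_linear_graph_add dominated_linear_graph_scale)+
  then have "a - b \<le> 0" "b - a \<le> 0"
    using dominated_linear_graph_le_norm[OF G] by fastforce+
  then show ?thesis by simp
qed

lemma dominated_linear_graph_separating_value:
  fixes z :: "'b::real_normed_vector"
  assumes G: "dominated_linear_graph G" and "(0, 0) \<in> G"
  obtains c where "\<And>x a. (x, a) \<in> G \<Longrightarrow> a - norm (x - z) \<le> c"
    and "\<And>x a. (x, a) \<in> G \<Longrightarrow> c \<le> norm (x + z) - a"
proof -
  define L where "L = {a - norm (x - z) | x a. (x, a) \<in> G}"
  have L_le: "l \<le> norm (y + z) - b" if "l \<in> L" "(y, b) \<in> G" for l y b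
  proof -
    obtain x a where "l = a - norm (x - z)" "(x, a) \<in> G"
      using \<open>l \<in> L\<close> unfolding L_def by blast
    moreover have "a + b \<le> norm (x + y)"
      using G \<open>(x, a) \<in> G\<close> \<open>(y, b) \<in> G\<close> by (meson dominated_linear_graphD)
    moreover have "norm (x + y) \<le> norm (x - z) + norm (y + z)"
      using norm_triangle_ineq[of "x - z" "y + z"] by simp
    ultimately show ?thesis by simp
  qed
  have "L \<noteq> {}" "bdd_above L"
    using \<open>(0, 0) \<in> G\<close> L_le unfolding L_def bdd_above_def by blast+
  show thesis
  proof (rule that[of "Sup L"])
    show "a - norm (x - z) \<le> Sup L" if "(x, a) \<in> G" for x a
      using that \<open>bdd_above L\<close> by (auto simp: L_def intro!: cSup_upper)
    show "Sup L \<le> norm (x + z) - a" if "(x, a) \<in> G" for x a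
      using \<open>L \<noteq> {}\<close> L_le that by (blast intro: cSup_least)
  qed
qed

lemma dominated_linear_graph_extension_value:
  fixes z :: "'b::real_normed_vector"
  assumes G: "dominated_linear_graph G" and "(0, 0) \<in> G"
  obtains c where "\<And>x a t. (x, a) \<in> G \<Longrightarrow> a + t * c \<le> norm (x + t *\<^sub>R z)"
proof -
  obtain c where c_lower: "\<And>x a. (x, a) \<in> G \<Longrightarrow> a - norm (x - z) \<le> c"
    and c_upper: "\<And>x a. (x, a) \<in> G \<Longrightarrow> c \<le> norm (x + z) - a"
    using dominated_linear_graph_separating_value[OF assms] by blast
  have "a + t * c \<le> norm (x + t *\<^sub>R z)" if "(x, a) \<in> G" for x a t
  proof -
    define N where "N = norm (x /\<^sub>R t + z)"
    have N: "norm (x + t *\<^sub>R z) = \<bar>t\<bar> * N" if "t \<noteq> 0"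
      using that norm_scaleR[of t "x /\<^sub>R t + z"] by (simp add: N_def scaleR_right_distrib)
    show ?thesis
    proof (cases t "0::real" rule: linorder_cases)
      case less
      have "- a / t - N \<le> c"
        using c_lower[OF dominated_linear_graph_scale[OF G that, of "- inverse t"]]
        by (simp add: N_def divide_inverse mult.commute add.commute
            norm_minus_commute[of "- (x /\<^sub>R t)"])
      then have "- t * (- a / t - N) \<le> - t * c"
        using less by (intro mult_left_mono) auto
      moreover have "- t * (- a / t - N) = a + t * N"
        using less by (simp add: field_simps)
      ultimately show ?thesis
        using less N by (simp add: algebra_simps)
    next
      case greater
      have "c \<le> N - a / t"
        using c_upper[OF dominated_linear_graph_scale[OF G that, of "inverse t"]]
        by (simp add: N_def divide_inverse mult.commute)
      then have "t * c \<le> t * (N - a / t)"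
        using greater by (intro mult_left_mono) auto
      moreover have "t * (N - a / t) = t * N - a"
        using greater by (simp add: field_simps)
      ultimately show ?thesis
        using greater N by (simp add: algebra_simps)
    qed (use dominated_linear_graph_le_norm[OF G that] in simp)
  qed
  then show thesis using that by blast
qed

lemma dominated_linear_graph_extend:
  assumes G: "dominated_linear_graph G" and "(0, 0) \<in> G" and z: "z \<notin> fst ` G"
  obtains G' where "dominated_linear_graph G'" "G \<subset> G'"
proof -
  obtain c where c: "\<And>x a t. (x, a) \<in> G \<Longrightarrow> a + t * c \<le> norm (x + t *\<^sub>R z)"
    using dominated_linear_graph_extension_value[OF G \<open>(0, 0) \<in> G\<close>] by blast
  define G' where "G' = {(x + t *\<^sub>R z, a + t * c) | x a t. (x, a) \<in> G}"
  have "dominated_linear_graph G'"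
    unfolding dominated_linear_graph_def
  proof (intro conjI allI impI)
    fix x a y b assume "(x, a) \<in> G'" "(y, b) \<in> G'"
    then obtain x1 a1 t1 x2 a2 t2 where "x = x1 + t1 *\<^sub>R z" "a = a1 + t1 * c" "(x1, a1) \<in> G"
      "y = x2 + t2 *\<^sub>R z" "b = a2 + t2 * c" "(x2, a2) \<in> G"
      unfolding G'_def by blast
    moreover have "((x1 + x2) + (t1 + t2) *\<^sub>R z, (a1 + a2) + (t1 + t2) * c) \<in> G'"
      unfolding G'_def using dominated_linear_graph_add[OF G \<open>(x1, a1) \<in> G\<close> \<open>(x2, a2) \<in> G\<close>]
      by blast
    ultimately show "(x + y, a + b) \<in> G'"
      by (simp add: algebra_simps)
  next
    fix x a r assume "(x, a) \<in> G'"
    then obtain x1 a1 t where "x = x1 + t *\<^sub>R z" "a = a1 + t * c" "(x1, a1) \<in> G"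
      unfolding G'_def by blast
    moreover have "(r *\<^sub>R x1 + (r * t) *\<^sub>R z, r * a1 + (r * t) * c) \<in> G'"
      unfolding G'_def using dominated_linear_graph_scale[OF G \<open>(x1, a1) \<in> G\<close>] by blast
    ultimately show "(r *\<^sub>R x, r * a) \<in> G'"
      by (simp add: algebra_simps)
  next
    fix x a assume "(x, a) \<in> G'"
    then show "a \<le> norm x"
      unfolding G'_def using c by blast
  qed
  moreover have "G \<subseteq> G'"
    unfolding G'_def by force
  moreover have "(z, c) \<in> G'"
    unfolding G'_def using \<open>(0, 0) \<in> G\<close> by force
  then have "G' \<noteq> G"
    using z by force
  ultimately show thesis
    using that by blast
qed

lemma dominated_linear_graph_Union_chain:
  assumes "\<And>G. G \<in> C \<Longrightarrow> dominated_linear_graph G"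
    and "\<And>G H. G \<in> C \<Longrightarrow> H \<in> C \<Longrightarrow> G \<subseteq> H \<or> H \<subseteq> G"
  shows "dominated_linear_graph (\<Union>C)"
  unfolding dominated_linear_graph_def
proof (intro conjI allI impI)
  fix x a y b assume "(x, a) \<in> \<Union>C" "(y, b) \<in> \<Union>C"
  then obtain G where "G \<in> C" "(x, a) \<in> G" "(y, b) \<in> G"
    using assms(2) by blast
  then show "(x + y, a + b) \<in> \<Union>C"
    using assms(1) dominated_linear_graph_add by blast
qed (use assms(1) dominated_linear_graphD in blast)+

lemma dominated_linear_graph_total_imp_functional:
  assumes G: "dominated_linear_graph G" and total: "\<And>x. \<exists>a. (x, a) \<in> G"
  obtains \<phi> where "bounded_linear \<phi>" "\<And>y. \<bar>\<phi> y\<bar> \<le> norm y" "\<And>x a. (x, a) \<in> G \<Longrightarrow> \<phi> x = a"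
proof -
  define \<phi> where "\<phi> x = (THE a. (x, a) \<in> G)" for x
  have graph: "(x, a) \<in> G \<longleftrightarrow> \<phi> x = a" for x a
    using total[of x] dominated_linear_graph_unique[OF G] unfolding \<phi>_def by (metis theI)
  have le_norm: "\<phi> y \<le> norm y" for y
    using dominated_linear_graph_le_norm[OF G] graph by blast
  have add: "\<phi> (x + y) = \<phi> x + \<phi> y" and scale: "\<phi> (r *\<^sub>R x) = r * \<phi> x" for x y r
    using dominated_linear_graphD(1,2)[OF G] graph by blast+
  have abs_le: "\<bar>\<phi> y\<bar> \<le> norm y" for y
    using le_norm[of y] le_norm[of "- y"] scale[of "-1" y] by simp
  have "bounded_linear \<phi>"
    by (rule bounded_linear_intro[where K = 1]) (use add scale abs_le in auto)
  then show thesis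
    using that abs_le graph by blast
qed

theorem norming_functional_exists:
  fixes x0 :: "'b::real_normed_vector"
  obtains \<phi> where "bounded_linear \<phi>" "\<And>y. \<bar>\<phi> y\<bar> \<le> norm y" "\<phi> x0 = norm x0"
proof -
  define G0 where "G0 = range (\<lambda>c. (c *\<^sub>R x0, c * norm x0))"
  define \<G> where "\<G> = {G. dominated_linear_graph G \<and> G0 \<subseteq> G}"
  have "dominated_linear_graph G0"
    unfolding dominated_linear_graph_def G0_def
    by (auto simp: mult_right_mono simp flip: scaleR_add_left distrib_right
        intro: range_eqI[of _ _ "_ * _"])
  then have "G0 \<in> \<G>"
    unfolding \<G>_def by blast
  moreover have "\<Union>C \<in> \<G>" if "C \<noteq> {}" "subset.chain \<G> C" for C
    using that dominated_linear_graph_Union_chain[of C] unfolding \<G>_def subset_chain_def by blast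
  ultimately obtain M where "M \<in> \<G>" and max: "\<And>G. G \<in> \<G> \<Longrightarrow> M \<subseteq> G \<Longrightarrow> G = M"
    using subset_Zorn_nonempty[of \<G>] by blast
  then have M: "dominated_linear_graph M" "G0 \<subseteq> M"
    unfolding \<G>_def by blast+
  have "(0, 0) \<in> M" "(x0, norm x0) \<in> M"
    using M(2) unfolding G0_def by (force intro: range_eqI[of _ _ 0] range_eqI[of _ _ 1])+
  have "\<exists>a. (x, a) \<in> M" for x
  proof (rule ccontr)
    assume "\<nexists>a. (x, a) \<in> M"
    then have "x \<notin> fst ` M"
      by force
    then obtain G where "dominated_linear_graph G" "M \<subset> G"
      using dominated_linear_graph_extend[OF M(1) \<open>(0, 0) \<in> M\<close>] by blast
    then show False
      using max[of G] M(2) unfolding \<G>_def by blast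
  qed
  then obtain \<phi> where "bounded_linear \<phi>" "\<And>y. \<bar>\<phi> y\<bar> \<le> norm y" "\<And>x a. (x, a) \<in> M \<Longrightarrow> \<phi> x = a"
    using dominated_linear_graph_total_imp_functional[OF M(1)] by blast
  then show thesis
    using that \<open>(x0, norm x0) \<in> M\<close> by blast
qed

section \<open>Weakly bounded sequences\<close>

lemma summable_abs_weighted_functionals:
  fixes \<psi> :: "nat \<Rightarrow> 'b::real_normed_vector \<Rightarrow> real"
  assumes "summable w" "\<And>j. 0 \<le> w j" "\<And>j y. \<bar>\<psi> j y\<bar> \<le> norm y"
  shows "summable (\<lambda>j. \<bar>w j * \<psi> j y\<bar>)"
    and "(\<Sum>j. \<bar>w j * \<psi> j y\<bar>) \<le> norm y * (\<Sum>j. w j)"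
proof -
  have le: "\<bar>w j * \<psi> j y\<bar> \<le> norm y * w j" for j
    using mult_left_mono[OF assms(3)[of j y] assms(2)[of j]] assms(2)[of j]
    by (simp add: abs_mult mult.commute)
  have "summable (\<lambda>j. norm y * w j)"
    using assms(1) by (rule summable_mult)
  then show "summable (\<lambda>j. \<bar>w j * \<psi> j y\<bar>)"
    by (rule summable_comparison_test'[where N = 0]) (use le in auto)
  with \<open>summable (\<lambda>j. norm y * w j)\<close> show "(\<Sum>j. \<bar>w j * \<psi> j y\<bar>) \<le> norm y * (\<Sum>j. w j)"
    using le suminf_le[of "\<lambda>j. \<bar>w j * \<psi> j y\<bar>" "\<lambda>j. norm y * w j"] suminf_mult[OF assms(1)]
    by simp
qed

lemma bounded_linear_weighted_suminf:
  fixes \<psi> :: "nat \<Rightarrow> 'b::real_normed_vector \<Rightarrow> real"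
  assumes w: "summable w" "\<And>j. 0 \<le> w j" and \<psi>: "\<And>j y. \<bar>\<psi> j y\<bar> \<le> norm y"
    and lin: "\<And>j. bounded_linear (\<psi> j)"
  shows "bounded_linear (\<lambda>y. \<Sum>j. w j * \<psi> j y)"
proof (rule bounded_linear_intro[where K = "\<Sum>j. w j"])
  note summable = summable_rabs_cancel[OF summable_abs_weighted_functionals(1)[OF w \<psi>]]
  have add: "\<psi> j (x + y) = \<psi> j x + \<psi> j y" and scale: "\<psi> j (r *\<^sub>R x) = r * \<psi> j x" for j x y r
    using lin[of j] by (simp_all add: linear_simps)
  show "(\<Sum>j. w j * \<psi> j (x + y)) = (\<Sum>j. w j * \<psi> j x) + (\<Sum>j. w j * \<psi> j y)" for x y
    unfolding add distrib_left by (rule suminf_add[OF summable summable, symmetric])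
  show "(\<Sum>j. w j * \<psi> j (r *\<^sub>R x)) = r *\<^sub>R (\<Sum>j. w j * \<psi> j x)" for r x
    unfolding scale using suminf_mult[OF summable, of r] by (simp add: algebra_simps)
  show "norm (\<Sum>j. w j * \<psi> j x) \<le> norm x * (\<Sum>j. w j)" for x
    using summable_rabs[OF summable_abs_weighted_functionals(1)[where \<psi> = \<psi> and y = x, OF w \<psi>]]
      summable_abs_weighted_functionals(2)[where \<psi> = \<psi> and y = x, OF w \<psi>] by simp
qed

lemma suminf_weighted_functionals_ge:
  fixes \<psi> :: "nat \<Rightarrow> 'b::real_normed_vector \<Rightarrow> real"
  assumes w: "summable w" "\<And>j. 0 \<le> w j" and \<psi>: "\<And>j y. \<bar>\<psi> j y\<bar> \<le> norm y"
  shows "w k * \<psi> k y - (\<Sum>j<k. w j * \<bar>\<psi> j y\<bar>) - norm y * (\<Sum>j. w (j + Suc k))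
           \<le> (\<Sum>j. w j * \<psi> j y)"
proof -
  have summable: "summable (\<lambda>j. w j * \<psi> j y)"
    using summable_rabs_cancel[OF summable_abs_weighted_functionals(1)[OF w \<psi>]] .
  have tail: "- norm y * (\<Sum>j. w (j + Suc k)) \<le> (\<Sum>j. w (j + Suc k) * \<psi> (j + Suc k) y)"
  proof -
    have "summable (\<lambda>j. w (j + Suc k))" "\<And>j. 0 \<le> w (j + Suc k)"
      using w summable_ignore_initial_segment[OF w(1), of "Suc k"] by simp_all
    note shifted = summable_abs_weighted_functionals[where \<psi> = "\<lambda>j. \<psi> (j + Suc k)" and y = y, OF this \<psi>]
    show ?thesis
      using summable_rabs[OF shifted(1)] shifted(2) by simp
  qed
  have head: "- (\<Sum>j<k. w j * \<bar>\<psi> j y\<bar>) \<le> (\<Sum>j<k. w j * \<psi> j y)"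
    unfolding sum_negf[symmetric]
  proof (rule sum_mono)
    show "- (w j * \<bar>\<psi> j y\<bar>) \<le> w j * \<psi> j y" for j
      using mult_left_mono[OF abs_ge_minus_self[of "\<psi> j y"] w(2)[of j]] by simp
  qed
  have "(\<Sum>j. w j * \<psi> j y)
      = (\<Sum>j. w (j + Suc k) * \<psi> (j + Suc k) y) + (\<Sum>j<k. w j * \<psi> j y) + w k * \<psi> k y"
    using suminf_split_initial_segment[OF summable, of "Suc k"] by simp
  then show ?thesis
    using head tail by linarith
qed

lemma third_power_weighted_suminf_ge:
  fixes \<psi> :: "nat \<Rightarrow> 'b::real_normed_vector \<Rightarrow> real"
  assumes "\<And>j y. \<bar>\<psi> j y\<bar> \<le> norm y" "\<psi> k y = norm y"
  shows "(1/3) ^ k * norm y / 2 - (\<Sum>j<k. (1/3) ^ j * \<bar>\<psi> j y\<bar>) \<le> (\<Sum>j. (1/3::real) ^ j * \<psi> j y)"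
proof -
  have "(\<Sum>j. (1/3::real) ^ (j + Suc k)) = (\<Sum>j. (1/3) ^ Suc k * (1/3) ^ j)"
    by (simp only: power_add mult.commute)
  also have "\<dots> = (1/3) ^ Suc k * (\<Sum>j. (1/3) ^ j)"
    by (rule suminf_mult) (simp add: summable_geometric)
  also have "\<dots> = (1/3) ^ k / 2"
    using suminf_geometric[of "1/3::real"] by simp
  finally have "norm y * (\<Sum>j. (1/3::real) ^ (j + Suc k)) = (1/3) ^ k * norm y / 2"
    by simp
  moreover have "(1/3) ^ k * \<psi> k y - (\<Sum>j<k. (1/3) ^ j * \<bar>\<psi> j y\<bar>)
      - norm y * (\<Sum>j. (1/3) ^ (j + Suc k)) \<le> (\<Sum>j. (1/3::real) ^ j * \<psi> j y)"
    by (rule suminf_weighted_functionals_ge) (simp_all add: summable_geometric assms(1))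
  ultimately show ?thesis
    unfolding assms(2) by argo
qed

theorem weakly_bounded_imp_Bseq:
  fixes x :: "nat \<Rightarrow> 'b::real_normed_vector"
  assumes weakly_bounded: "\<And>\<phi>::'b \<Rightarrow> real. bounded_linear \<phi> \<Longrightarrow> Bseq (\<lambda>n. \<phi> (x n))"
  shows "Bseq x"
proof (rule ccontr)
  assume unbounded: "\<not> Bseq x"
  obtain M where M: "\<And>(\<phi>::'b \<Rightarrow> real) n. bounded_linear \<phi> \<Longrightarrow> \<bar>\<phi> (x n)\<bar> \<le> M \<phi>"
    using weakly_bounded unfolding Bseq_def real_norm_def by metis
  obtain \<psi> where \<psi>: "\<And>n. bounded_linear (\<psi> n)" "\<And>n y. \<bar>\<psi> n y\<bar> \<le> norm y"
    "\<And>n. \<psi> n (x n) = norm (x n)"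
  proof -
    have "\<forall>n. \<exists>\<phi>::'b \<Rightarrow> real. bounded_linear \<phi> \<and> (\<forall>y. \<bar>\<phi> y\<bar> \<le> norm y) \<and> \<phi> (x n) = norm (x n)"
      by (metis norming_functional_exists)
    then show thesis
      using that by metis
  qed
  obtain N where N: "\<And>k s. 2 * (real k + s + 1) \<le> (1/3) ^ k * norm (x (N k s))"
  proof -
    have "\<exists>n. 2 * (real k + s + 1) \<le> (1/3) ^ k * norm (x n)" for k s
    proof -
      obtain n where "2 * (real k + s + 1) / (1/3) ^ k < norm (x n)"
        using unbounded BseqI' not_le by metis
      then show ?thesis
        by (auto simp: pos_divide_less_eq mult.commute intro: less_imp_le)
    qed
    then show thesis
      using that by metis
  qed
  \<comment> \<open>The gliding hump: n k is chosen so large that the k-th term of \<phi> at x (n k) dominates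
    the earlier terms, whose contribution S k is bounded in terms of M.\<close>
  define S where "S = rec_nat 0 (\<lambda>k s. s + (1/3) ^ k * M (\<psi> (N k s)))"
  define n where "n k = N k (S k)" for k
  have S: "S k = (\<Sum>j<k. (1/3) ^ j * M (\<psi> (n j)))" for k
    by (induction k) (simp_all add: S_def n_def)
  define \<phi> where "\<phi> y = (\<Sum>j. (1/3::real) ^ j * \<psi> (n j) y)" for y
  have "bounded_linear \<phi>"
    unfolding \<phi>_def by (rule bounded_linear_weighted_suminf) (simp_all add: summable_geometric \<psi>)
  have hump: "real k + 1 \<le> \<phi> (x (n k))" for k
  proof -
    have "(1/3) ^ k * norm (x (n k)) / 2 - (\<Sum>j<k. (1/3) ^ j * \<bar>\<psi> (n j) (x (n k))\<bar>) \<le> \<phi> (x (n k))"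
      unfolding \<phi>_def by (rule third_power_weighted_suminf_ge) (simp_all add: \<psi>)
    moreover have "(\<Sum>j<k. (1/3) ^ j * \<bar>\<psi> (n j) (x (n k))\<bar>) \<le> S k"
      unfolding S using M[OF \<psi>(1)] by (intro sum_mono mult_left_mono) auto
    moreover have "2 * (real k + S k + 1) \<le> (1/3) ^ k * norm (x (n k))"
      unfolding n_def by (rule N)
    ultimately show ?thesis
      by argo
  qed
  obtain k :: nat where "M \<phi> < k"
    using reals_Archimedean2 by blast
  then show False
    using hump[of k] M[OF \<open>bounded_linear \<phi>\<close>, of "n k"] by linarith
qed

lemma weakly_convergent_imp_Bseq:
  assumes "weakly_convergent_to x y"
  shows "Bseq x"
proof (rule weakly_bounded_imp_Bseq)
  fix \<phi> :: "'a \<Rightarrow> real"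
  assume "bounded_linear \<phi>"
  then have "(\<lambda>n. \<phi> (x n)) \<longlonglongrightarrow> \<phi> y"
    using assms unfolding weakly_convergent_to_def by blast
  then show "Bseq (\<lambda>n. \<phi> (x n))"
    by (rule convergent_imp_Bseq[OF convergentI])
qed

section \<open>Disjoint open sets\<close>

lemma regular_Hausdorff_split_infinite:
  assumes "regular_space X" "Hausdorff_space X" "openin X V" "infinite (A \<inter> V)"
  obtains W V' where "openin X W" "openin X V'" "A \<inter> W \<noteq> {}" "W \<union> V' \<subseteq> V" "disjnt W V'"
    "infinite (A \<inter> V')"
proof -
  obtain p q where pq: "p \<in> A \<inter> V" "q \<in> A \<inter> V" "p \<noteq> q"
  proof -
    obtain p where "p \<in> A \<inter> V"
      using infinite_imp_nonempty[OF assms(4)] by blast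
    moreover obtain q where "q \<in> A \<inter> V - {p}"
      using infinite_imp_nonempty[of "A \<inter> V - {p}"] assms(4) by auto
    ultimately show thesis
      using that by blast
  qed
  have "p \<in> topspace X" "q \<in> topspace X"
    using pq openin_subset[OF assms(3)] by auto
  then obtain P Q where PQ: "openin X P" "openin X Q" "p \<in> P" "q \<in> Q" "disjnt P Q"
    using assms(2) pq(3) unfolding Hausdorff_space_def by blast
  have shrink: "\<exists>U C. openin X U \<and> closedin X C \<and> x \<in> U \<and> U \<subseteq> C \<and> C \<subseteq> W"
    if "openin X W" "x \<in> W" for W x
    using assms(1) that unfolding neighbourhood_base_of_closedin[symmetric] neighbourhood_base_of
    by blast
  obtain P' C where P': "openin X P'" "closedin X C" "p \<in> P'" "P' \<subseteq> C" "C \<subseteq> P \<inter> V"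
    using shrink[of "P \<inter> V" p] PQ assms(3) pq by blast
  obtain Q' D where Q': "openin X Q'" "closedin X D" "q \<in> Q'" "Q' \<subseteq> D" "D \<subseteq> Q \<inter> V"
    using shrink[of "Q \<inter> V" q] PQ assms(3) pq by blast
  have "A \<inter> V \<subseteq> (A \<inter> (V - C)) \<union> (A \<inter> (V - D))"
    using P'(5) Q'(5) PQ(5) unfolding disjnt_def by blast
  then consider "infinite (A \<inter> (V - C))" | "infinite (A \<inter> (V - D))"
    using assms(4) finite_subset by auto
  then show thesis
  proof cases
    case 1
    show thesis
      by (rule that[of P' "V - C"]) (use 1 P' pq assms(3) openin_diff in \<open>auto simp: disjnt_def\<close>)
  next
    case 2
    show thesis
      by (rule that[of Q' "V - D"]) (use 2 Q' pq assms(3) openin_diff in \<open>auto simp: disjnt_def\<close>)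
  qed
qed

lemma regular_Hausdorff_disjoint_open_sequence:
  assumes "regular_space X" "Hausdorff_space X" "A \<subseteq> topspace X" "infinite A"
  obtains U :: "nat \<Rightarrow> 'a set" where "disjoint_family U" "\<And>n. openin X (U n)" "\<And>n. A \<inter> U n \<noteq> {}"
proof -
  define P where "P WV \<longleftrightarrow> openin X (fst WV) \<and> openin X (snd WV) \<and> A \<inter> fst WV \<noteq> {}
      \<and> disjnt (fst WV) (snd WV) \<and> infinite (A \<inter> snd WV)" for WV :: "'a set \<times> 'a set"
  have step: "\<exists>WV'. P WV' \<and> fst WV' \<union> snd WV' \<subseteq> V" if V: "openin X V" "infinite (A \<inter> V)" for V
  proof -
    obtain W V' where "openin X W" "openin X V'" "A \<inter> W \<noteq> {}" "W \<union> V' \<subseteq> V" "disjnt W V'"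
      "infinite (A \<inter> V')"
      using regular_Hausdorff_split_infinite[OF assms(1,2) V] by blast
    then show ?thesis
      unfolding P_def by (intro exI[of _ "(W, V')"]) simp
  qed
  have "\<exists>WV. P WV"
    using step[of "topspace X"] assms(3,4) by (metis inf.absorb1 openin_topspace)
  moreover have "\<exists>WV'. P WV' \<and> fst WV' \<union> snd WV' \<subseteq> snd WV" if "P WV" for WV
    using step that unfolding P_def by blast
  ultimately obtain WV where WV: "\<And>n. P (WV n)" "\<And>n. fst (WV (Suc n)) \<union> snd (WV (Suc n)) \<subseteq> snd (WV n)"
    using dependent_nat_choice[of "\<lambda>_. P" "\<lambda>_ WV WV'. fst WV' \<union> snd WV' \<subseteq> snd WV"] by blast
  define U where "U n = fst (WV n)" for n
  have antimono: "snd (WV m) \<subseteq> snd (WV n)" if "n \<le> m" for m n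
    using that WV(2) by (induction rule: dec_induct) blast+
  have "U m \<subseteq> snd (WV n)" if "n < m" for m n
  proof -
    obtain m' where "m = Suc m'" "n \<le> m'"
      using \<open>n < m\<close> by (cases m) auto
    then show ?thesis
      using WV(2)[of m'] antimono[of n m'] unfolding U_def by blast
  qed
  then have "U m \<inter> U n = {}" if "n < m" for m n
    using that WV(1)[of n] unfolding U_def P_def disjnt_def by blast
  then have "disjoint_family U"
    unfolding disjoint_family_on_def by (metis Int_commute linorder_neqE_nat)
  then show thesis
    using that WV(1) unfolding U_def P_def by blast
qed

lemma restrict_zero_in_Cfun: "restrict (\<lambda>_. 0) (topspace X) \<in> Cfun X"
proof -
  have "continuous_map X euclideanreal (restrict (\<lambda>_. 0) (topspace X))"
    by (rule continuous_map_eq[of _ _ "\<lambda>_. 0"]) simp_all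
  then show ?thesis
    unfolding Cfun_def by simp
qed

lemma disjoint_supports_tendsto_zero:
  assumes "disjoint_family U" "\<And>n. supp X (f n) \<subseteq> U n" "t \<in> topspace X"
  shows "(\<lambda>n. f n t) \<longlonglongrightarrow> 0"
proof (rule tendsto_eventually)
  have zero: "f n t = 0" if "t \<notin> U n" for n
    using assms(2,3) that unfolding supp_def by blast
  show "\<forall>\<^sub>F n in sequentially. f n t = 0"
  proof (cases "\<exists>k. t \<in> U k")
    case True
    then obtain k where "t \<in> U k"
      by blast
    then have "t \<notin> U n" if "n \<ge> Suc k" for n
      using disjoint_family_onD[OF assms(1), of k n] that by auto
    then show ?thesis
      unfolding eventually_sequentially using zero by blast
  next
    case False
    then show ?thesis
      using zero by simp
  qed
qed

lemma not_in_BT_imp_large_value: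
  assumes "t \<in> topspace X - BT X T" "openin X U" "t \<in> U"
  obtains g where "g \<in> Cfun X" "supp X g \<subseteq> U" "r < norm (T g)"
proof (rule ccontr)
  assume "\<not> thesis"
  then have "\<nexists>g. g \<in> Cfun X \<and> supp X g \<subseteq> U \<and> r < norm (T g)"
    using that by blast
  then have "bdd_above {norm (T g) | g. g \<in> Cfun X \<and> supp X g \<subseteq> U}"
    by (auto simp: not_less intro!: bdd_aboveI[of _ r])
  then show False
    using assms unfolding BT_def by blast
qed

theorem lemma3p3:
  fixes X :: "'a topology" and T :: "('a \<Rightarrow> real) \<Rightarrow> 'b::banach"
  assumes "tychonoff_space X"
    and "infinite (topspace X)"
    and "seq_cont_Cp_weak X T"
  shows "finite (topspace X - BT X T)"
proof (rule ccontr)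
  assume "infinite (topspace X - BT X T)"
  moreover have "regular_space X" "Hausdorff_space X"
    using assms(1) completely_regular_imp_regular_space unfolding tychonoff_space_def by auto
  ultimately obtain U :: "nat \<Rightarrow> 'a set" where U: "disjoint_family U" "\<And>n. openin X (U n)"
    "\<And>n. (topspace X - BT X T) \<inter> U n \<noteq> {}"
    using regular_Hausdorff_disjoint_open_sequence[of X "topspace X - BT X T"] by blast
  have "\<forall>n. \<exists>g. g \<in> Cfun X \<and> supp X g \<subseteq> U n \<and> real n < norm (T g)"
    using U(2,3) not_in_BT_imp_large_value by (metis disjoint_iff)
  then obtain f where f: "\<And>n. f n \<in> Cfun X" "\<And>n. supp X (f n) \<subseteq> U n"
    "\<And>n. real n < norm (T (f n))"
    by metis
  have "(\<lambda>n. f n t) \<longlonglongrightarrow> restrict (\<lambda>_. 0) (topspace X) t" if "t \<in> topspace X" for t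
    using disjoint_supports_tendsto_zero[OF U(1) f(2) that] that by simp
  then have "weakly_convergent_to (\<lambda>n. T (f n)) (T (restrict (\<lambda>_. 0) (topspace X)))"
    using assms(3) f(1) restrict_zero_in_Cfun unfolding seq_cont_Cp_weak_def by blast
  then obtain K where K: "\<And>n. norm (T (f n)) \<le> K"
    using weakly_convergent_imp_Bseq BseqE by metis
  obtain n :: nat where "K < n"
    using reals_Archimedean2 by blast
  then show False
    using K[of n] f(3)[of n] by linarith
qed

end
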